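(* Let $(X_1,\xi_1),(X_2,\xi_2)$ be marked Dynkin diagrams and $\Delta_i=\Delta_{X_i}$. Then for all $k\ge1$, $$\det Z_k=(k-1)\Delta_1\Delta_2+\big(\det X_1\,\Delta_2+\det X_2\,\Delta_1\big).$$
   Context: A marked Dynkin diagram $(X,\xi)$ is the Dynkin diagram of a symmetrizable generalized Cartan matrix $C(X)$ together with a distinguished node $\xi$; $\det X:=\det C(X)$. $X(-1)$ denotes the diagram obtained from $X$ by deleting $\xi$ and all edges incident to it (with the convention $\det$ of the empty diagram is $1$), and $\Delta_X:=\det X-\det X(-1)$. For $k\ge1$, $Z_k=Z_k(X_1,X_2)$ is the Dynkin diagram obtained from the disjoint union of $X_1$, a path $A_k$ with nodes $1,\dots,k$ (consecutive nodes joined by simple edges) and $X_2$, by adding a simple edge between $\xi_1$ and node $1$ and one between node $k$ and $\xi_2$ (simple edge: Cartan entries $-1,-1$). *)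

theory Defs
  imports "Jordan_Normal_Form.Determinant"
begin

text \<open>A Dynkin diagram is represented by its generalized Cartan matrix, an n x n
integer matrix with nodes 0..n-1. Symmetrizable generalized Cartan matrix:\<close>

definition gcm :: "int mat \<Rightarrow> bool" where
  "gcm A \<longleftrightarrow> A \<in> carrier_mat (dim_row A) (dim_row A) \<and>
     (\<forall>i<dim_row A. A $$ (i,i) = 2) \<and>
     (\<forall>i<dim_row A. \<forall>j<dim_row A. i \<noteq> j \<longrightarrow>
         A $$ (i,j) \<le> 0 \<and> (A $$ (i,j) = 0 \<longleftrightarrow> A $$ (j,i) = 0))"

definition symmetrizable :: "int mat \<Rightarrow> bool" where
  "symmetrizable A \<longleftrightarrow> (\<exists>d :: nat \<Rightarrow> rat. (\<forall>i<dim_row A. d i > 0) \<and>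
     (\<forall>i<dim_row A. \<forall>j<dim_row A. d i * of_int (A $$ (i,j)) = d j * of_int (A $$ (j,i))))"

definition marked_dynkin :: "int mat \<Rightarrow> nat \<Rightarrow> bool" where
  "marked_dynkin A \<xi> \<longleftrightarrow> gcm A \<and> symmetrizable A \<and> \<xi> < dim_row A"

text \<open>X(-1): delete the distinguished node (det of the empty 0x0 matrix is 1).\<close>
definition del_node :: "int mat \<Rightarrow> nat \<Rightarrow> int mat" where
  "del_node A \<xi> = mat_delete A \<xi> \<xi>"

definition Delta :: "int mat \<Rightarrow> nat \<Rightarrow> int" where
  "Delta A \<xi> = det A - det (del_node A \<xi>)"

text \<open>Z_k(X1,X2): nodes 0..n1-1 are X1, n1..n1+k-1 are the path A_k (path node p is
index n1+p-1), n1+k..n1+k+n2-1 are X2. Simple edges join \<xi>1 with path node 1 and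
path node k with \<xi>2.\<close>
definition Zk :: "int mat \<Rightarrow> nat \<Rightarrow> int mat \<Rightarrow> nat \<Rightarrow> nat \<Rightarrow> int mat" where
  "Zk A1 \<xi>1 A2 \<xi>2 k = (let n1 = dim_row A1; n2 = dim_row A2; N = n1 + k + n2 in
     mat N N (\<lambda>(i,j).
       if i < n1 \<and> j < n1 then A1 $$ (i,j)
       else if n1 + k \<le> i \<and> n1 + k \<le> j then A2 $$ (i - (n1+k), j - (n1+k))
       else if n1 \<le> i \<and> i < n1 + k \<and> n1 \<le> j \<and> j < n1 + k then
         (if i = j then 2 else if i = j + 1 \<or> j = i + 1 then -1 else 0)
       else if (i = \<xi>1 \<and> j = n1) \<or> (i = n1 \<and> j = \<xi>1) then -1
       else if (i = n1 + k - 1 \<and> j = n1 + k + \<xi>2) \<or> (i = n1 + k + \<xi>2 \<and> j = n1 + k - 1) then -1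
       else 0))"

end

theory Submission
  imports Defs
begin

text \<open>Joining a diagram A at node a to a diagram B at node b by an edge with Cartan entries e, f
  changes the determinant det A * det B of the disjoint union by -e f det A(-a) det B(-b): the
  determinant is affine in e and in f, it stays det A * det B when e = 0 or f = 0 (the matrix is
  then block triangular), and the coefficient of e f is a cofactor of a cofactor, which is
  det A(-a) det B(-b) up to sign. Z_k is X_1 joined to W_k, the path A_k joined to X_2. Since
  det A_k = k + 1 and deleting the first path node of W_k leaves W_(k-1), this gives
  det W_k = (k + 1) det X_2 - k det X_2(-1), and the claim becomes a polynomial identity.\<close>

lemma mat_delete_row_cong:
  assumes "M \<in> carrier_mat N N" "M' \<in> carrier_mat N N"
    and "\<And>r c. r < N \<Longrightarrow> c < N \<Longrightarrow> r \<noteq> i \<Longrightarrow> M $$ (r,c) = M' $$ (r,c)"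
  shows "mat_delete M i j = mat_delete M' i j"
  using assms unfolding mat_delete_def by (intro eq_matI) auto

lemma det_change_one_entry:
  fixes M M' :: "'a::comm_ring_1 mat"
  assumes M: "M \<in> carrier_mat N N" and M': "M' \<in> carrier_mat N N"
    and i: "i < N" and j: "j < N"
    and eq: "\<And>r c. r < N \<Longrightarrow> c < N \<Longrightarrow> (r,c) \<noteq> (i,j) \<Longrightarrow> M $$ (r,c) = M' $$ (r,c)"
  shows "det M = det M' + (M $$ (i,j) - M' $$ (i,j)) * cofactor M' i j"
proof -
  have cof: "cofactor M i c = cofactor M' i c" for c
    unfolding cofactor_def using mat_delete_row_cong[OF M M', of i c] eq by auto
  have "det M - det M' = (\<Sum>c<N. (M $$ (i,c) - M' $$ (i,c)) * cofactor M' i c)"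
    unfolding laplace_expansion_row[OF M i] laplace_expansion_row[OF M' i] cof
    by (simp add: sum_subtractf algebra_simps)
  also have "\<dots> = (M $$ (i,j) - M' $$ (i,j)) * cofactor M' i j"
    by (rule sum.mono_neutral_left[where S = "{j}", symmetric, simplified]) (use i j eq in auto)
  finally show ?thesis by (simp add: algebra_simps)
qed

lemma mat_delete_mat_delete_swap:
  assumes "r1 < r2" "c1 < c2"
  shows "mat_delete (mat_delete M r1 c2) (r2 - 1) c1
    = mat_delete (mat_delete M r1 c1) (r2 - 1) (c2 - 1)"
  using assms by (intro eq_matI) (auto simp: mat_delete_def)

lemma mat_delete_block_diag_right:
  assumes "A \<in> carrier_mat n n" "B \<in> carrier_mat m m" "j < m"
  shows "mat_delete (four_block_mat A (0\<^sub>m n m) (0\<^sub>m m n) B) (n + j) (n + j)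
    = four_block_mat A (0\<^sub>m n (m - 1)) (0\<^sub>m (m - 1) n) (mat_delete B j j)"
  using assms by (intro eq_matI) (auto simp: mat_delete_def Suc_diff_le)

definition glue :: "'a::zero mat \<Rightarrow> nat \<Rightarrow> 'a mat \<Rightarrow> nat \<Rightarrow> 'a \<Rightarrow> 'a \<Rightarrow> 'a mat" where
  "glue A a B b e f = four_block_mat A
     (mat (dim_row A) (dim_row B) (\<lambda>(i,j). if i = a \<and> j = b then e else 0))
     (mat (dim_row B) (dim_row A) (\<lambda>(i,j). if i = b \<and> j = a then f else 0)) B"

lemma glue_carrier:
  "A \<in> carrier_mat n n \<Longrightarrow> B \<in> carrier_mat m m \<Longrightarrow>
    glue A a B b e f \<in> carrier_mat (n + m) (n + m)"
  unfolding glue_def by auto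

lemma dim_glue [simp]:
  "dim_row (glue A a B b e f) = dim_row A + dim_row B"
  "dim_col (glue A a B b e f) = dim_col A + dim_col B"
  unfolding glue_def by simp_all

lemma index_glue:
  assumes "A \<in> carrier_mat n n" "B \<in> carrier_mat m m" "i < n + m" "j < n + m"
  shows "glue A a B b e f $$ (i,j) =
    (if i < n \<and> j < n then A $$ (i,j)
     else if n \<le> i \<and> n \<le> j then B $$ (i - n, j - n)
     else if i = a \<and> j = n + b then e
     else if i = n + b \<and> j = a then f else 0)"
  using assms by (auto simp: glue_def)

lemma glue_empty_left:
  assumes "A \<in> carrier_mat 0 0" "B \<in> carrier_mat m m"
  shows "glue A a B b e f = B"
  using assms by (intro eq_matI) (auto simp: glue_def)

lemma det_glue_zero_upper:
  fixes A B :: "'a::idom mat"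
  assumes "A \<in> carrier_mat n n" "B \<in> carrier_mat m m"
  shows "det (glue A a B b 0 f) = det A * det B"
  unfolding glue_def using assms
  by (intro det_four_block_mat_upper_right_zero) (auto simp: zero_mat_def)

lemma det_glue_zero_lower:
  fixes A B :: "'a::idom mat"
  assumes "A \<in> carrier_mat n n" "B \<in> carrier_mat m m"
  shows "det (glue A a B b e 0) = det A * det B"
  unfolding glue_def using assms
  by (intro det_four_block_mat_lower_left_zero) (auto simp: zero_mat_def)

lemma mat_delete_glue_left:
  assumes "A \<in> carrier_mat n n" "B \<in> carrier_mat m m" "a < n"
  shows "mat_delete (glue A a B b e f) a a
    = four_block_mat (mat_delete A a a) (0\<^sub>m (n - 1) m) (0\<^sub>m m (n - 1)) B"
  using assms by (intro eq_matI) (auto simp: glue_def mat_delete_def)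

lemma mat_delete_mat_delete_glue:
  assumes A: "A \<in> carrier_mat n n" and B: "B \<in> carrier_mat m m" and a: "a < n" and b: "b < m"
  shows "mat_delete (mat_delete (glue A a B b e f) a (n + b)) (n + b - 1) a
    = four_block_mat (mat_delete A a a) (0\<^sub>m (n - 1) (m - 1)) (0\<^sub>m (m - 1) (n - 1))
        (mat_delete B b b)"
proof -
  have "mat_delete (mat_delete (glue A a B b e f) a (n + b)) (n + b - 1) a
      = mat_delete (mat_delete (glue A a B b e f) a a) ((n - 1) + b) ((n - 1) + b)"
    using mat_delete_mat_delete_swap[of a "n + b" a "n + b"] a by simp
  also have "\<dots> = four_block_mat (mat_delete A a a) (0\<^sub>m (n - 1) (m - 1))
      (0\<^sub>m (m - 1) (n - 1)) (mat_delete B b b)"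
    unfolding mat_delete_glue_left[OF A B a]
    using b by (rule mat_delete_block_diag_right[OF mat_delete_carrier[OF A] B])
  finally show ?thesis .
qed

lemma det_glue:
  fixes A B :: "'a::idom mat"
  assumes A: "A \<in> carrier_mat n n" and B: "B \<in> carrier_mat m m" and a: "a < n" and b: "b < m"
  shows "det (glue A a B b e f)
    = det A * det B - e * f * det (mat_delete A a a) * det (mat_delete B b b)"
proof -
  let ?D = "\<lambda>f. mat_delete (glue A a B b 0 f) a (n + b)"
  note dims = carrier_matD[OF A] carrier_matD[OF B]
  have G: "glue A a B b e f \<in> carrier_mat (n + m) (n + m)" for e f
    using glue_carrier[OF A B] .
  have D: "?D f \<in> carrier_mat (n + m - 1) (n + m - 1)" for f
    using mat_delete_carrier[OF G] .
  have expand_e: "det (glue A a B b e f) = det A * det B + e * (-1) ^ (a + (n + b)) * det (?D f)"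
    for e f
  proof -
    have "det (glue A a B b e f) = det (glue A a B b 0 f)
        + (glue A a B b e f $$ (a, n + b) - glue A a B b 0 f $$ (a, n + b))
          * cofactor (glue A a B b 0 f) a (n + b)"
      by (rule det_change_one_entry[OF G G]) (use a b in \<open>auto simp: index_glue[OF A B]\<close>)
    then show ?thesis
      using a b by (simp add: index_glue[OF A B] det_glue_zero_upper[OF A B] cofactor_def)
  qed
  have "det (?D 0) = 0"
    using expand_e[of 1 0] det_glue_zero_lower[OF A B] by simp
  have expand_f: "det (?D f) = f * (-1) ^ (n + b - 1 + a) * det (mat_delete (?D 0) (n + b - 1) a)"
    for f
  proof -
    have "det (?D f) = det (?D 0)
        + (?D f $$ (n + b - 1, a) - ?D 0 $$ (n + b - 1, a)) * cofactor (?D 0) (n + b - 1) a"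
      by (rule det_change_one_entry[OF D D])
        (use a b in \<open>auto simp: mat_delete_def index_glue[OF A B] dims\<close>)
    then show ?thesis
      using a b \<open>det (?D 0) = 0\<close>
      by (simp add: mat_delete_def index_glue[OF A B] dims cofactor_def)
  qed
  have minor: "det (mat_delete (?D 0) (n + b - 1) a)
      = det (mat_delete A a a) * det (mat_delete B b b)"
    unfolding mat_delete_mat_delete_glue[OF A B a b]
    by (rule det_four_block_mat_upper_right_zero
        [OF mat_delete_carrier[OF A] refl zero_carrier_mat mat_delete_carrier[OF B]])
  have sign: "(-1) ^ (a + (n + b)) * (-1) ^ (n + b - 1 + a) = (-1 :: 'a)"
  proof -
    have "a + (n + b) = Suc (n + b - 1 + a)" using a by simp
    then show ?thesis by (simp only: power_Suc) (simp add: minus_one_mult_self)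
  qed
  show ?thesis
    using sign unfolding expand_e expand_f minor by (simp add: algebra_simps)
qed

definition cartan_path :: "nat \<Rightarrow> int mat" where
  "cartan_path k = mat k k (\<lambda>(i,j). if i = j then 2 else if i = j + 1 \<or> j = i + 1 then -1 else 0)"

lemma cartan_path_carrier: "cartan_path k \<in> carrier_mat k k"
  unfolding cartan_path_def by simp

lemma index_cartan_path:
  "i < k \<Longrightarrow> j < k \<Longrightarrow>
    cartan_path k $$ (i,j) = (if i = j then 2 else if i = j + 1 \<or> j = i + 1 then -1 else 0)"
  unfolding cartan_path_def by simp

lemma mat_delete_cartan_path_last: "mat_delete (cartan_path (Suc k)) k k = cartan_path k"
  unfolding cartan_path_def mat_delete_def by (intro eq_matI) auto

lemma cartan_path_Suc_Suc:
  "cartan_path (Suc (Suc k)) = glue (cartan_path (Suc k)) k (mat 1 1 (\<lambda>_. 2)) 0 (-1) (-1)"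
  by (intro eq_matI) (auto simp: glue_def cartan_path_def)

lemma det_cartan_path: "det (cartan_path k) = int k + 1"
proof (induction k rule: induct_nat_012)
  case 0
  show ?case by (simp add: cartan_path_def)
next
  case 1
  have "det (cartan_path 1) = cartan_path 1 $$ (0, 0)"
    by (rule det_single[OF cartan_path_carrier])
  then show ?case by (simp add: cartan_path_def)
next
  case (ge2 k)
  let ?two = "mat 1 1 (\<lambda>_. 2) :: int mat"
  have two: "?two \<in> carrier_mat 1 1" "det ?two = 2" "det (mat_delete ?two 0 0) = 1"
    by (auto simp: det_single mat_delete_def)
  have "det (cartan_path (Suc (Suc k)))
      = det (cartan_path (Suc k)) * 2 - det (mat_delete (cartan_path (Suc k)) k k)"
    unfolding cartan_path_Suc_Suc
    using det_glue[OF cartan_path_carrier[of "Suc k"] two(1), of k 0 "-1" "-1"] two by simp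
  then show ?case using ge2 by (simp add: mat_delete_cartan_path_last)
qed

lemma mat_delete_glue_cartan_path:
  assumes "B \<in> carrier_mat m m"
  shows "mat_delete (glue (cartan_path (Suc k)) k B b e f) 0 0
    = glue (cartan_path k) (k - 1) B b e f"
  using assms by (intro eq_matI) (auto simp: glue_def cartan_path_def mat_delete_def)

lemma det_glue_cartan_path:
  assumes B: "B \<in> carrier_mat m m" and b: "b < m"
  shows "det (glue (cartan_path k) (k - 1) B b (-1) (-1))
    = (int k + 1) * det B - int k * det (mat_delete B b b)"
proof (cases k)
  case 0
  then show ?thesis using glue_empty_left[OF _ B] cartan_path_carrier[of 0] by simp
next
  case (Suc j)
  then show ?thesis
    using det_glue[OF cartan_path_carrier B _ b, of "k - 1" k] b
    by (simp add: mat_delete_cartan_path_last det_cartan_path)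
qed

lemma index_Zk:
  assumes "A1 \<in> carrier_mat n1 n1" "A2 \<in> carrier_mat n2 n2"
    and "i < n1 + k + n2" "j < n1 + k + n2"
  shows "Zk A1 x1 A2 x2 k $$ (i,j) =
     (if i < n1 \<and> j < n1 then A1 $$ (i,j)
      else if n1 + k \<le> i \<and> n1 + k \<le> j then A2 $$ (i - (n1+k), j - (n1+k))
      else if n1 \<le> i \<and> i < n1 + k \<and> n1 \<le> j \<and> j < n1 + k then
        (if i = j then 2 else if i = j + 1 \<or> j = i + 1 then -1 else 0)
      else if (i = x1 \<and> j = n1) \<or> (i = n1 \<and> j = x1) then -1
      else if (i = n1 + k - 1 \<and> j = n1 + k + x2) \<or> (i = n1 + k + x2 \<and> j = n1 + k - 1) then -1
      else 0)"
proof -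
  have "dim_row A1 = n1" "dim_row A2 = n2" using assms(1,2) by auto
  then show ?thesis using assms(3,4) unfolding Zk_def Let_def by (simp only: index_mat split)
qed

lemma Zk_eq_glue:
  assumes A1: "A1 \<in> carrier_mat n1 n1" and A2: "A2 \<in> carrier_mat n2 n2" and x1: "x1 < n1"
  shows "Zk A1 x1 A2 x2 (Suc k)
    = glue A1 x1 (glue (cartan_path (Suc k)) k A2 x2 (-1) (-1)) 0 (-1) (-1)"
    (is "_ = glue A1 x1 ?W 0 _ _")
proof (rule eq_matI)
  have W: "?W \<in> carrier_mat (Suc k + n2) (Suc k + n2)"
    by (rule glue_carrier[OF cartan_path_carrier A2])
  fix i j
  assume "i < dim_row (glue A1 x1 ?W 0 (-1) (-1))" "j < dim_col (glue A1 x1 ?W 0 (-1) (-1))"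
  then have i: "i < n1 + (Suc k + n2)" and j: "j < n1 + (Suc k + n2)"
    using A1 W by auto
  then have i': "i < n1 + Suc k + n2" and j': "j < n1 + Suc k + n2"
    by simp_all
  show "Zk A1 x1 A2 x2 (Suc k) $$ (i, j) = glue A1 x1 ?W 0 (-1) (-1) $$ (i, j)"
  proof (cases "n1 \<le> i \<and> n1 \<le> j")
    case True
    then obtain p q where p: "i = n1 + p" and q: "j = n1 + q"
      using le_Suc_ex by blast
    have "p < Suc k + n2" "q < Suc k + n2" using i j p q by simp_all
    then show ?thesis
      unfolding index_glue[OF A1 W i j] index_Zk[OF A1 A2 i' j'] unfolding p q
      using x1 by (cases "p < Suc k"; cases "q < Suc k")
        (auto simp: index_glue[OF cartan_path_carrier A2] index_cartan_path)
  next
    case False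
    then show ?thesis
      unfolding index_glue[OF A1 W i j] index_Zk[OF A1 A2 i' j']
      using x1 by (cases "i < n1"; cases "j < n1") simp_all
  qed
qed (use A1 A2 in \<open>simp_all add: Zk_def Let_def cartan_path_def\<close>)

lemma marked_dynkinD:
  assumes "marked_dynkin A \<xi>"
  shows "A \<in> carrier_mat (dim_row A) (dim_row A)" "\<xi> < dim_row A"
  using assms unfolding marked_dynkin_def gcm_def by auto

theorem lemma3p5:
  fixes A1 A2 :: "int mat" and \<xi>1 \<xi>2 k :: nat
  assumes "marked_dynkin A1 \<xi>1" and "marked_dynkin A2 \<xi>2" and "k \<ge> 1"
  shows "det (Zk A1 \<xi>1 A2 \<xi>2 k) =
    (int k - 1) * Delta A1 \<xi>1 * Delta A2 \<xi>2
    + (det A1 * Delta A2 \<xi>2 + det A2 * Delta A1 \<xi>1)"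
proof -
  note A1 = marked_dynkinD[OF assms(1)] and A2 = marked_dynkinD[OF assms(2)]
  obtain j where k: "k = Suc j" using assms(3) by (cases k) auto
  let ?W = "glue (cartan_path k) j A2 \<xi>2 (-1) (-1)"
  have W: "?W \<in> carrier_mat (k + dim_row A2) (k + dim_row A2)"
    by (rule glue_carrier[OF cartan_path_carrier A2(1)])
  have "det (Zk A1 \<xi>1 A2 \<xi>2 k) = det (glue A1 \<xi>1 ?W 0 (-1) (-1))"
    unfolding k by (rule arg_cong[OF Zk_eq_glue[OF A1(1) A2(1) A1(2)]])
  also have "\<dots> = det A1 * det ?W - det (del_node A1 \<xi>1) * det (mat_delete ?W 0 0)"
    unfolding del_node_def using det_glue[OF A1(1) W A1(2), of 0] k by simp
  also have "det ?W = (int k + 1) * det A2 - int k * det (del_node A2 \<xi>2)"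
    using det_glue_cartan_path[OF A2, of k] k by (simp add: del_node_def)
  also have "det (mat_delete ?W 0 0) = int k * det A2 - (int k - 1) * det (del_node A2 \<xi>2)"
    using det_glue_cartan_path[OF A2, of j] k
    by (simp add: mat_delete_glue_cartan_path[OF A2(1)] del_node_def)
  finally show ?thesis unfolding Delta_def by (simp add: algebra_simps)
qed

end
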